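(* Let $p\in[1,\infty]$ and $d\in\mathbb N$. For $n\in\mathbb N$ let $s_n\in\mathbb N$ and let $\mathbf w^{(n)}=(\mathbf w^{(n)}_0,\dots,\mathbf w^{(n)}_{s_n})\in\mathbb R^{s_n+1}$ be filter masks, let $m_0:=d$, $m_n:=m_{n-1}+s_n$, and let $\mathbf b_n\in\mathbb R^{m_n}$ be bias vectors. Suppose $\sum_{n=1}^\infty\|\mathbf b_n\|_p<\infty$, $\mathbf w^{(n)}_0=1$ for all $n\in\mathbb N$, and $\sum_{n=1}^\infty\sum_{j=1}^{s_n}|\mathbf w^{(n)}_j|<\infty$. Then the deep ReLU convolutional neural networks $x^{(n)}$ converge pointwise on $[0,1]^d$, i.e. for each $x\in[0,1]^d$ the sequence $\tilde x^{(n)}$ converges in $\ell^p$.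
   Context: $\sigma(t)=\max(t,0)$ applied componentwise. For $\mathbf x\in\mathbb R^m$ and $\mathbf w=(\mathbf w_0,\dots,\mathbf w_s)$, the convolution $\mathbf x*\mathbf w\in\mathbb R^{m+s}$ has entries $(\mathbf x*\mathbf w)_i=\sum_{j=\max(0,i-m)}^{\min(i-1,s)}\mathbf w_j\mathbf x_{i-j}$, $1\le i\le m+s$; equivalently $\mathbf x*\mathbf w=\mathbf W\mathbf x$ with $\mathbf W\in\mathbb R^{(m+s)\times m}$, $\mathbf W_{jk}=\mathbf w_{j-k}$ if $0\le j-k\le s$ and $0$ otherwise. The CNN is defined by $x^{(0)}:=x\in[0,1]^d$ and $x^{(n)}:=\sigma(x^{(n-1)}*\mathbf w^{(n)}+\mathbf b_n)\in\mathbb R^{m_n}$; $\tilde x^{(n)}\in\ell^p$ denotes $x^{(n)}$ extended by zeros beyond its first $m_n$ entries. *)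

theory Defs
  imports "HOL-Analysis.Analysis"
begin

text \<open>Vectors in R^m are represented 0-based as functions nat => real; only the
entries with index < m are meaningful (entry i here is entry i+1 of the paper).\<close>

definition relu :: "real \<Rightarrow> real" where
  "relu t = max t 0"

definition conv :: "nat \<Rightarrow> nat \<Rightarrow> (nat \<Rightarrow> real) \<Rightarrow> (nat \<Rightarrow> real) \<Rightarrow> nat \<Rightarrow> real" where
  "conv m s w x i = (\<Sum>j\<le>s. if j \<le> i \<and> i - j < m then w j * x (i - j) else 0)"

fun width :: "nat \<Rightarrow> (nat \<Rightarrow> nat) \<Rightarrow> nat \<Rightarrow> nat" where
  "width d s 0 = d"
| "width d s (Suc n) = width d s n + s (Suc n)"

definition zext :: "nat \<Rightarrow> (nat \<Rightarrow> real) \<Rightarrow> nat \<Rightarrow> real" where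
  "zext m v i = (if i < m then v i else 0)"

text \<open>The CNN layers x^(n), already extended by zeros (i.e. the sequences tilde x^(n)).\<close>
fun cnn :: "nat \<Rightarrow> (nat \<Rightarrow> nat) \<Rightarrow> (nat \<Rightarrow> nat \<Rightarrow> real) \<Rightarrow> (nat \<Rightarrow> nat \<Rightarrow> real)
             \<Rightarrow> (nat \<Rightarrow> real) \<Rightarrow> nat \<Rightarrow> nat \<Rightarrow> real" where
  "cnn d s w b x 0 = zext d x"
| "cnn d s w b x (Suc n) = zext (width d s (Suc n))
     (\<lambda>i. relu (conv (width d s n) (s (Suc n)) (w (Suc n)) (cnn d s w b x n) i + b (Suc n) i))"

definition lp_norm :: "ereal \<Rightarrow> (nat \<Rightarrow> real) \<Rightarrow> real" where
  "lp_norm p f = (if p = \<infinity> then (SUP i. \<bar>f i\<bar>)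
                  else (\<Sum>i. \<bar>f i\<bar> powr real_of_ereal p) powr (1 / real_of_ereal p))"

definition in_lp :: "ereal \<Rightarrow> (nat \<Rightarrow> real) \<Rightarrow> bool" where
  "in_lp p f = (if p = \<infinity> then bounded (range f)
                else summable (\<lambda>i. \<bar>f i\<bar> powr real_of_ereal p))"

end

(* Since w^(n)_0 = 1, the convolution x^(n-1) * w^(n) is x^(n-1) plus a tail built from the shifted
   copies of x^(n-1) weighted by w^(n)_1, ..., w^(n)_(s_n).  As x^(n-1) >= 0 and the ReLU is 1-Lipschitz
   and fixes nonnegative numbers, this gives
     |x^(n) - x^(n-1)|_p <= a_n |x^(n-1)|_p + |b_n|_p,   a_n = sum_(j>=1) |w^(n)_j|.
   As (a_n) and (|b_n|_p) are summable, a discrete Gronwall argument bounds |x^(n)|_p uniformly;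
   then the increments are dominated by a summable sequence and (x^(n)) is Cauchy in l^p.
   The estimates are made on the first N entries, where the norms are finite sums, uniformly in N. *)
theory Submission
  imports Defs
begin

section \<open>Minkowski's inequality for finite sums\<close>

lemma convex_on_powr_nonneg:
  fixes r :: real
  assumes "1 \<le> r"
  shows "convex_on {0..} (\<lambda>x. x powr r)"
proof (rule convex_on_linorderI)
  fix t x y :: real
  assume t: "0 < t" "t < 1" and xy: "x \<in> {0..}" "y \<in> {0..}" "x < y"
  show "((1 - t) *\<^sub>R x + t *\<^sub>R y) powr r \<le> (1 - t) * x powr r + t * y powr r"
  proof (cases "x = 0")
    case True
    have "t powr r \<le> t"
      using t assms powr_le_one_le[of t r] by simp
    then have "t powr r * y powr r \<le> t * y powr r"
      by (intro mult_right_mono) auto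
    then show ?thesis
      using True t xy by (simp add: powr_mult)
  next
    case False
    then show ?thesis
      using convex_onD[OF powr_convex[OF assms], of t x y] t xy by simp
  qed
qed auto

lemma minkowski_finite_sum:
  fixes r :: real
  assumes r: "1 \<le> r" and fin: "finite A"
  shows "(\<Sum>i\<in>A. \<bar>f i + g i\<bar> powr r) powr (1/r)
    \<le> (\<Sum>i\<in>A. \<bar>f i\<bar> powr r) powr (1/r) + (\<Sum>i\<in>A. \<bar>g i\<bar> powr r) powr (1/r)"
proof -
  define a where "a = (\<Sum>i\<in>A. \<bar>f i\<bar> powr r) powr (1/r)"
  define b where "b = (\<Sum>i\<in>A. \<bar>g i\<bar> powr r) powr (1/r)"
  have vanish: "\<forall>i\<in>A. h i = 0" if "(\<Sum>i\<in>A. \<bar>h i\<bar> powr r) powr (1/r) = 0" for h :: "'a \<Rightarrow> real"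
    using that fin by (simp add: sum_nonneg_eq_0_iff)
  show ?thesis
  proof (cases "a = 0 \<or> b = 0")
    case True
    then show ?thesis
    proof
      assume "a = 0"
      then have "\<forall>i\<in>A. f i = 0"
        using vanish[of f] unfolding a_def by blast
      then have "(\<Sum>i\<in>A. \<bar>f i + g i\<bar> powr r) = (\<Sum>i\<in>A. \<bar>g i\<bar> powr r)"
        by simp
      with \<open>a = 0\<close> show ?thesis
        unfolding a_def b_def by simp
    next
      assume "b = 0"
      then have "\<forall>i\<in>A. g i = 0"
        using vanish[of g] unfolding b_def by blast
      then have "(\<Sum>i\<in>A. \<bar>f i + g i\<bar> powr r) = (\<Sum>i\<in>A. \<bar>f i\<bar> powr r)"
        by simp
      with \<open>b = 0\<close> show ?thesis
        unfolding a_def b_def by simp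
    qed
  next
    case False
    then have a0: "a > 0" "b > 0"
      unfolding a_def b_def by auto
    have Sa: "(\<Sum>i\<in>A. \<bar>f i\<bar> powr r) = a powr r" and Sb: "(\<Sum>i\<in>A. \<bar>g i\<bar> powr r) = b powr r"
      unfolding a_def b_def using r by (simp_all add: powr_powr sum_nonneg)
    define t where "t = b / (a + b)"
    have t: "0 \<le> t" "t \<le> 1" "1 - t = a / (a + b)"
      using a0 by (auto simp: t_def field_simps)
    \<comment> \<open>Write \<open>\<bar>f i\<bar> + \<bar>g i\<bar>\<close> as \<open>a + b\<close> times a convex combination of \<open>\<bar>f i\<bar>/a\<close> and \<open>\<bar>g i\<bar>/b\<close>.\<close>
    have pointwise: "\<bar>f i + g i\<bar> powr r
        \<le> (a + b) powr r * ((1 - t) * (\<bar>f i\<bar> / a) powr r + t * (\<bar>g i\<bar> / b) powr r)" for i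
    proof -
      have "\<bar>f i\<bar> + \<bar>g i\<bar> = (a + b) * ((1 - t) * (\<bar>f i\<bar> / a) + t * (\<bar>g i\<bar> / b))"
        unfolding t(3) t_def using a0 by (simp add: divide_simps)
      then have "\<bar>f i + g i\<bar> powr r \<le> ((a + b) * ((1 - t) * (\<bar>f i\<bar> / a) + t * (\<bar>g i\<bar> / b))) powr r"
        using r by (metis abs_triangle_ineq abs_ge_zero powr_mono2 order_trans zero_le_one)
      also have "\<dots> = (a + b) powr r * ((1 - t) * (\<bar>f i\<bar> / a) + t * (\<bar>g i\<bar> / b)) powr r"
        using a0 t by (simp add: powr_mult)
      also have "\<dots> \<le> (a + b) powr r * ((1 - t) * (\<bar>f i\<bar> / a) powr r + t * (\<bar>g i\<bar> / b) powr r)"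
        using convex_onD[OF convex_on_powr_nonneg[OF r], of t "\<bar>f i\<bar> / a" "\<bar>g i\<bar> / b"] t a0
        by (intro mult_left_mono) auto
      finally show ?thesis .
    qed
    have "(\<Sum>i\<in>A. \<bar>f i + g i\<bar> powr r)
        \<le> (\<Sum>i\<in>A. (a + b) powr r * ((1 - t) * (\<bar>f i\<bar> / a) powr r + t * (\<bar>g i\<bar> / b) powr r))"
      by (intro sum_mono pointwise)
    also have "\<dots> = (a + b) powr r * ((1 - t) * (\<Sum>i\<in>A. \<bar>f i\<bar> powr r) / a powr r
        + t * (\<Sum>i\<in>A. \<bar>g i\<bar> powr r) / b powr r)"
      using a0 by (simp add: powr_divide sum.distrib sum_distrib_left sum_divide_distrib distrib_left)
    also have "\<dots> = (a + b) powr r"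
      using a0 unfolding Sa Sb by simp
    finally have "(\<Sum>i\<in>A. \<bar>f i + g i\<bar> powr r) powr (1/r) \<le> ((a + b) powr r) powr (1/r)"
      using r by (intro powr_mono2) (auto intro: sum_nonneg)
    also have "\<dots> = a + b"
      using a0 r by (simp add: powr_powr)
    finally show ?thesis
      by (simp add: a_def b_def)
  qed
qed

section \<open>Truncated \<open>\<ell>\<^sup>p\<close> norms\<close>

definition lp_trunc :: "ereal \<Rightarrow> nat \<Rightarrow> (nat \<Rightarrow> real) \<Rightarrow> real" where
  "lp_trunc p N f = (if p = \<infinity> then Max (insert 0 ((\<lambda>i. \<bar>f i\<bar>) ` {..<N}))
     else (\<Sum>i<N. \<bar>f i\<bar> powr real_of_ereal p) powr (1 / real_of_ereal p))"

lemma one_le_real_of_ereal: "1 \<le> p \<Longrightarrow> p \<noteq> \<infinity> \<Longrightarrow> 1 \<le> real_of_ereal p"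
  by (cases p) auto

lemma lp_trunc_finite:
  "p \<noteq> \<infinity> \<Longrightarrow> lp_trunc p N f = (\<Sum>i<N. \<bar>f i\<bar> powr real_of_ereal p) powr (1 / real_of_ereal p)"
  by (simp add: lp_trunc_def)

lemma lp_trunc_zero_length [simp]: "lp_trunc p 0 f = 0"
  by (simp add: lp_trunc_def)

lemma lp_trunc_nonneg: "0 \<le> lp_trunc p N f"
  by (simp add: lp_trunc_def)

lemma lp_trunc_infinity_le:
  assumes "p = \<infinity>" "0 \<le> B" "\<And>i. i < N \<Longrightarrow> \<bar>f i\<bar> \<le> B"
  shows "lp_trunc p N f \<le> B"
  using assms by (simp add: lp_trunc_def)

lemma abs_le_lp_trunc:
  assumes "1 \<le> p" "i < N"
  shows "\<bar>f i\<bar> \<le> lp_trunc p N f"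
proof (cases "p = \<infinity>")
  case True
  then show ?thesis
    using assms by (simp add: lp_trunc_def)
next
  case False
  let ?r = "real_of_ereal p"
  have r: "1 \<le> ?r"
    using one_le_real_of_ereal[OF assms(1) False] .
  have "\<bar>f i\<bar> = (\<bar>f i\<bar> powr ?r) powr (1/?r)"
    using r by (simp add: powr_powr)
  also have "\<dots> \<le> lp_trunc p N f"
    unfolding lp_trunc_finite[OF False] using assms r by (intro powr_mono2 member_le_sum) auto
  finally show ?thesis .
qed

lemma lp_trunc_triangle:
  assumes "1 \<le> p"
  shows "lp_trunc p N (\<lambda>i. f i + g i) \<le> lp_trunc p N f + lp_trunc p N g"
proof (cases "p = \<infinity>")
  case True
  have "\<bar>f i + g i\<bar> \<le> lp_trunc p N f + lp_trunc p N g" if "i < N" for i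
    using abs_le_lp_trunc[OF assms that, of f] abs_le_lp_trunc[OF assms that, of g] by linarith
  then show ?thesis
    using True lp_trunc_nonneg[of p N f] lp_trunc_nonneg[of p N g] by (intro lp_trunc_infinity_le) auto
next
  case False
  then show ?thesis
    using minkowski_finite_sum[OF one_le_real_of_ereal[OF assms False], of "{..<N}" f g]
    by (simp add: lp_trunc_finite)
qed

lemma lp_trunc_mono:
  assumes "1 \<le> p" "\<And>i. i < N \<Longrightarrow> \<bar>f i\<bar> \<le> \<bar>g i\<bar>"
  shows "lp_trunc p N f \<le> lp_trunc p N g"
proof (cases "p = \<infinity>")
  case True
  have "\<bar>f i\<bar> \<le> lp_trunc p N g" if "i < N" for i
    using assms(2)[OF that] abs_le_lp_trunc[OF assms(1) that, of g] by linarith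
  then show ?thesis
    using True lp_trunc_nonneg[of p N g] by (intro lp_trunc_infinity_le) auto
next
  case False
  show ?thesis
    unfolding lp_trunc_finite[OF False] using one_le_real_of_ereal[OF assms(1) False]
    by (intro powr_mono2 sum_mono) (auto intro: sum_nonneg assms(2))
qed

lemma lp_trunc_minus_commute: "1 \<le> p \<Longrightarrow> lp_trunc p N (\<lambda>i. f i - g i) = lp_trunc p N (\<lambda>i. g i - f i)"
  by (intro antisym lp_trunc_mono) (auto simp: abs_minus_commute)

lemma lp_trunc_mult_le:
  assumes "1 \<le> p"
  shows "lp_trunc p N (\<lambda>i. c * f i) \<le> \<bar>c\<bar> * lp_trunc p N f"
proof (cases "p = \<infinity>")
  case True
  have "\<bar>c * f i\<bar> \<le> \<bar>c\<bar> * lp_trunc p N f" if "i < N" for i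
    using abs_le_lp_trunc[OF assms that, of f] by (simp add: abs_mult mult_left_mono)
  then show ?thesis
    using True lp_trunc_nonneg[of p N f] by (intro lp_trunc_infinity_le) auto
next
  case False
  let ?r = "real_of_ereal p"
  have r: "1 \<le> ?r"
    using one_le_real_of_ereal[OF assms False] .
  have "(\<Sum>i<N. \<bar>c * f i\<bar> powr ?r) = \<bar>c\<bar> powr ?r * (\<Sum>i<N. \<bar>f i\<bar> powr ?r)"
    by (simp add: abs_mult powr_mult sum_distrib_left)
  then have "lp_trunc p N (\<lambda>i. c * f i) = (\<bar>c\<bar> powr ?r) powr (1/?r) * lp_trunc p N f"
    by (simp add: lp_trunc_finite[OF False] powr_mult sum_nonneg)
  also have "\<dots> = \<bar>c\<bar> * lp_trunc p N f"
    using r by (simp add: powr_powr)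
  finally show ?thesis
    by simp
qed

lemma lp_trunc_zero: "lp_trunc p N (\<lambda>_. 0) = 0"
proof (cases "p = \<infinity>")
  case True
  then show ?thesis
    using lp_trunc_infinity_le[OF True, of 0 N "\<lambda>_. 0"] lp_trunc_nonneg[of p N "\<lambda>_. 0"] by simp
qed (simp add: lp_trunc_finite)

lemma lp_trunc_sum_le:
  assumes "1 \<le> p" "finite J"
  shows "lp_trunc p N (\<lambda>i. \<Sum>j\<in>J. g j i) \<le> (\<Sum>j\<in>J. lp_trunc p N (g j))"
  using assms(2)
proof (induction J rule: finite_induct)
  case empty
  then show ?case
    by (simp add: lp_trunc_zero)
next
  case (insert j J)
  have "lp_trunc p N (\<lambda>i. \<Sum>j\<in>insert j J. g j i) = lp_trunc p N (\<lambda>i. g j i + (\<Sum>j\<in>J. g j i))"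
    using insert by simp
  also have "\<dots> \<le> lp_trunc p N (g j) + lp_trunc p N (\<lambda>i. \<Sum>j\<in>J. g j i)"
    by (rule lp_trunc_triangle[OF assms(1)])
  also have "\<dots> \<le> lp_trunc p N (g j) + (\<Sum>j\<in>J. lp_trunc p N (g j))"
    using insert by simp
  finally show ?case
    using insert by simp
qed

lemma lp_trunc_diff_triangle:
  assumes "1 \<le> p"
  shows "lp_trunc p N (\<lambda>i. f i - g i) \<le> lp_trunc p N (\<lambda>i. f i - h i) + lp_trunc p N (\<lambda>i. h i - g i)"
  using lp_trunc_triangle[OF assms, of N "\<lambda>i. f i - h i" "\<lambda>i. h i - g i"] by simp

lemma lp_trunc_le_sum_abs:
  assumes "1 \<le> p"
  shows "lp_trunc p N f \<le> (\<Sum>i<N. \<bar>f i\<bar>) * lp_trunc p N (\<lambda>_. 1)"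
proof -
  have "lp_trunc p N f \<le> lp_trunc p N (\<lambda>_. (\<Sum>i<N. \<bar>f i\<bar>) * 1)"
    by (intro lp_trunc_mono[OF assms]) (auto intro: member_le_sum simp: sum_nonneg)
  also have "\<dots> \<le> \<bar>\<Sum>i<N. \<bar>f i\<bar>\<bar> * lp_trunc p N (\<lambda>_. 1)"
    by (rule lp_trunc_mult_le[OF assms])
  finally show ?thesis
    by (simp add: sum_nonneg)
qed

lemma lp_trunc_mono_length:
  assumes "1 \<le> p" "N \<le> M"
  shows "lp_trunc p N f \<le> lp_trunc p M f"
proof (cases "p = \<infinity>")
  case True
  then show ?thesis
    using assms by (auto simp: lp_trunc_def intro!: Max_mono)
next
  case False
  show ?thesis
    unfolding lp_trunc_finite[OF False] using assms one_le_real_of_ereal[OF assms(1) False]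
    by (intro powr_mono2 sum_mono2) (auto intro: sum_nonneg)
qed

lemma lp_trunc_le_support:
  assumes "1 \<le> p" "\<And>i. M \<le> i \<Longrightarrow> f i = 0"
  shows "lp_trunc p N f \<le> lp_trunc p M f"
proof (cases "N \<le> M")
  case True
  then show ?thesis
    by (rule lp_trunc_mono_length[OF assms(1)])
next
  case NM: False
  show ?thesis
  proof (cases "p = \<infinity>")
    case True
    have "\<bar>f i\<bar> \<le> lp_trunc p M f" if "i < N" for i
      using lp_trunc_nonneg[of p M f] abs_le_lp_trunc[OF assms(1), of i M f] assms(2)[of i]
      by (cases "i < M") auto
    then show ?thesis
      using True lp_trunc_nonneg[of p M f] by (intro lp_trunc_infinity_le) auto
  next
    case False
    have "(\<Sum>i<N. \<bar>f i\<bar> powr real_of_ereal p) = (\<Sum>i<M. \<bar>f i\<bar> powr real_of_ereal p)"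
      using NM assms(2) by (intro sum.mono_neutral_right) auto
    then show ?thesis
      by (simp add: lp_trunc_finite[OF False])
  qed
qed

lemma incseq_lp_trunc: "1 \<le> p \<Longrightarrow> incseq (\<lambda>N. lp_trunc p N f)"
  by (intro incseq_SucI lp_trunc_mono_length) auto

lemma lp_norm_eq_SUP_lp_trunc:
  assumes p: "1 \<le> p" and bdd: "bdd_above (range (\<lambda>N. lp_trunc p N f))"
  shows "in_lp p f" and "lp_norm p f = (SUP N. lp_trunc p N f)"
proof -
  obtain B where B: "\<And>N. lp_trunc p N f \<le> B"
    using bdd by (auto simp: bdd_above_def)
  have f_le: "\<bar>f i\<bar> \<le> B" for i
    using abs_le_lp_trunc[OF p, of i "Suc i" f] B[of "Suc i"] by simp
  have "in_lp p f \<and> lp_norm p f = (SUP N. lp_trunc p N f)"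
  proof (cases "p = \<infinity>")
    case True
    have bdd_abs: "bdd_above (range (\<lambda>i. \<bar>f i\<bar>))"
      using f_le by (auto simp: bdd_above_def)
    have "(SUP i. \<bar>f i\<bar>) = (SUP N. lp_trunc p N f)"
    proof (rule antisym)
      show "(SUP i. \<bar>f i\<bar>) \<le> (SUP N. lp_trunc p N f)"
      proof (rule cSUP_least)
        fix i
        show "\<bar>f i\<bar> \<le> (SUP N. lp_trunc p N f)"
          using abs_le_lp_trunc[OF p, of i "Suc i" f] cSUP_upper[OF _ bdd, of "Suc i"] by simp
      qed simp
      have "0 \<le> (SUP i. \<bar>f i\<bar>)"
        using cSUP_upper[OF _ bdd_abs, of 0] by (meson UNIV_I abs_ge_zero order_trans)
      then show "(SUP N. lp_trunc p N f) \<le> (SUP i. \<bar>f i\<bar>)"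
        using cSUP_upper[OF _ bdd_abs] True by (intro cSUP_least lp_trunc_infinity_le) auto
    qed
    moreover have "bounded (range f)"
      unfolding bounded_iff using f_le by auto
    ultimately show ?thesis
      using True by (simp add: in_lp_def lp_norm_def)
  next
    case False
    let ?r = "real_of_ereal p"
    have r: "1 \<le> ?r"
      using one_le_real_of_ereal[OF p False] .
    have partial: "(\<Sum>i<N. \<bar>f i\<bar> powr ?r) = lp_trunc p N f powr ?r" for N
      using r by (simp add: lp_trunc_finite[OF False] powr_powr sum_nonneg)
    have summable: "summable (\<lambda>i. \<bar>f i\<bar> powr ?r)"
    proof (rule bounded_imp_summable)
      fix n
      have "(\<Sum>k\<le>n. \<bar>f k\<bar> powr ?r) = lp_trunc p (Suc n) f powr ?r"
        by (simp add: lessThan_Suc_atMost flip: partial)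
      also have "\<dots> \<le> B powr ?r"
        using B r lp_trunc_nonneg by (intro powr_mono2) auto
      finally show "(\<Sum>k\<le>n. \<bar>f k\<bar> powr ?r) \<le> B powr ?r" .
    qed simp
    have "(\<lambda>N. (\<Sum>i<N. \<bar>f i\<bar> powr ?r) powr (1/?r)) \<longlonglongrightarrow> (\<Sum>i. \<bar>f i\<bar> powr ?r) powr (1/?r)"
      using r by (intro tendsto_powr2 summable_LIMSEQ summable) (auto intro!: always_eventually sum_nonneg)
    then have "(\<lambda>N. lp_trunc p N f) \<longlonglongrightarrow> lp_norm p f"
      using False by (simp add: lp_trunc_finite lp_norm_def)
    then have "lp_norm p f = (SUP N. lp_trunc p N f)"
      using LIMSEQ_incseq_SUP[OF bdd incseq_lp_trunc[OF p]] LIMSEQ_unique by blast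
    then show ?thesis
      using False summable by (simp add: in_lp_def)
  qed
  then show "in_lp p f" and "lp_norm p f = (SUP N. lp_trunc p N f)"
    by auto
qed

lemma lp_trunc_le_lp_norm:
  assumes "1 \<le> p" "bdd_above (range (\<lambda>N. lp_trunc p N f))"
  shows "lp_trunc p N f \<le> lp_norm p f"
  using lp_norm_eq_SUP_lp_trunc(2)[OF assms] cSUP_upper[OF _ assms(2)] by simp

lemma lp_norm_le_if_lp_trunc_le:
  assumes "1 \<le> p" "\<And>N. lp_trunc p N f \<le> B"
  shows "in_lp p f" and "0 \<le> lp_norm p f" and "lp_norm p f \<le> B"
proof -
  have bdd: "bdd_above (range (\<lambda>N. lp_trunc p N f))"
    using assms(2) by (auto simp: bdd_above_def)
  show "in_lp p f"
    by (rule lp_norm_eq_SUP_lp_trunc(1)[OF assms(1) bdd])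
  show "0 \<le> lp_norm p f"
    using lp_trunc_le_lp_norm[OF assms(1) bdd, of 0] lp_trunc_nonneg[of p 0 f] by linarith
  show "lp_norm p f \<le> B"
    unfolding lp_norm_eq_SUP_lp_trunc(2)[OF assms(1) bdd] by (intro cSUP_least assms(2)) simp
qed

section \<open>Convergence from summable increments\<close>

lemma lp_trunc_bounded_if_increments_linear:
  fixes X :: "nat \<Rightarrow> nat \<Rightarrow> real" and a \<beta> :: "nat \<Rightarrow> real"
  assumes p: "1 \<le> p"
    and a: "\<And>n. 0 \<le> a n" "summable a" and \<beta>: "summable \<beta>"
    and start: "\<And>N. lp_trunc p N (X 0) \<le> K"
    and increment: "\<And>n N. lp_trunc p N (\<lambda>i. X (Suc n) i - X n i) \<le> a n * lp_trunc p N (X n) + \<beta> n"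
  shows "lp_trunc p N (X n) \<le> (K + suminf \<beta>) * exp (suminf a)"
proof -
  have \<beta>_nonneg: "0 \<le> \<beta> n" for n
    using increment[of 0 n] by simp
  have K: "0 \<le> K"
    using start[of 0] lp_trunc_nonneg[of p 0 "X 0"] by linarith
  \<comment> \<open>discrete Gronwall: \<open>1 + a n \<le> exp (a n)\<close> turns the recursive bound into a product\<close>
  have partial: "lp_trunc p N (X n) \<le> (K + (\<Sum>k<n. \<beta> k)) * exp (\<Sum>k<n. a k)" for n N
  proof (induction n arbitrary: N)
    case 0
    then show ?case
      using start by simp
  next
    case (Suc n)
    define E where "E = K + (\<Sum>k<n. \<beta> k)"
    define P where "P = exp (\<Sum>k<n. a k)"
    have E: "0 \<le> E" and P: "1 \<le> P"
      unfolding E_def P_def using K \<beta>_nonneg a(1) by (simp_all add: sum_nonneg)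
    have "lp_trunc p N (X (Suc n)) \<le> lp_trunc p N (X n) + lp_trunc p N (\<lambda>i. X (Suc n) i - X n i)"
      using lp_trunc_triangle[OF p, of N "X n" "\<lambda>i. X (Suc n) i - X n i"] by simp
    also have "\<dots> \<le> (1 + a n) * lp_trunc p N (X n) + \<beta> n"
      using increment[of N n] by (simp add: algebra_simps)
    also have "\<dots> \<le> exp (a n) * (E * P) + \<beta> n * (exp (a n) * P)"
    proof (rule add_mono)
      have "lp_trunc p N (X n) \<le> E * P"
        using Suc by (simp add: E_def P_def)
      then show "(1 + a n) * lp_trunc p N (X n) \<le> exp (a n) * (E * P)"
        using a(1)[of n] lp_trunc_nonneg by (intro mult_mono) auto
      have "1 \<le> exp (a n) * P"
        using a(1)[of n] P mult_mono[of 1 "exp (a n)" 1 P] by simp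
      then show "\<beta> n \<le> \<beta> n * (exp (a n) * P)"
        using \<beta>_nonneg[of n] mult_left_mono[of 1 "exp (a n) * P" "\<beta> n"] by simp
    qed
    also have "\<dots> = (K + (\<Sum>k<Suc n. \<beta> k)) * exp (\<Sum>k<Suc n. a k)"
      by (simp add: E_def P_def exp_add algebra_simps)
    finally show ?case .
  qed
  also have "(K + (\<Sum>k<n. \<beta> k)) * exp (\<Sum>k<n. a k) \<le> (K + suminf \<beta>) * exp (suminf a)"
    using K \<beta>_nonneg a suminf_nonneg[OF \<beta> \<beta>_nonneg] sum_le_suminf[OF \<beta>, of "{..<n}"] sum_le_suminf[OF a(2), of "{..<n}"]
    by (intro mult_mono add_left_mono) (auto simp: sum_nonneg)
  finally show ?thesis .
qed

lemma lp_trunc_diff_le_tail: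
  fixes X :: "nat \<Rightarrow> nat \<Rightarrow> real"
  assumes p: "1 \<le> p" and \<delta>: "summable \<delta>"
    and increment: "\<And>n N. lp_trunc p N (\<lambda>i. X (Suc n) i - X n i) \<le> \<delta> n"
    and "n \<le> m"
  shows "lp_trunc p N (\<lambda>i. X m i - X n i) \<le> (\<Sum>j. \<delta> (j + n))"
proof -
  have \<delta>_nonneg: "0 \<le> \<delta> n" for n
    using increment[of 0 n] by simp
  have "lp_trunc p N (\<lambda>i. X (n + k) i - X n i) \<le> (\<Sum>j<k. \<delta> (j + n))" for k
  proof (induction k)
    case 0
    then show ?case
      by (simp add: lp_trunc_zero)
  next
    case (Suc k)
    have "lp_trunc p N (\<lambda>i. X (n + Suc k) i - X n i)
        \<le> lp_trunc p N (\<lambda>i. X (Suc (n + k)) i - X (n + k) i) + lp_trunc p N (\<lambda>i. X (n + k) i - X n i)"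
      using lp_trunc_diff_triangle[OF p] by simp
    also have "\<dots> \<le> \<delta> (k + n) + (\<Sum>j<k. \<delta> (j + n))"
      using increment[of N "n + k"] Suc by (simp add: add.commute)
    finally show ?case
      by simp
  qed
  also have "(\<Sum>j<m - n. \<delta> (j + n)) \<le> (\<Sum>j. \<delta> (j + n))"
    using \<delta>_nonneg by (intro sum_le_suminf summable_ignore_initial_segment \<delta>) auto
  finally show ?thesis
    using \<open>n \<le> m\<close> by simp
qed

lemma lp_convergent_if_summable_increments:
  fixes X :: "nat \<Rightarrow> nat \<Rightarrow> real"
  assumes p: "1 \<le> p" and \<delta>: "summable \<delta>"
    and start: "\<And>N. lp_trunc p N (X 0) \<le> K"
    and increment: "\<And>n N. lp_trunc p N (\<lambda>i. X (Suc n) i - X n i) \<le> \<delta> n"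
  shows "\<exists>y. in_lp p y \<and> (\<lambda>n. lp_norm p (\<lambda>i. X n i - y i)) \<longlonglongrightarrow> 0"
proof -
  define T where "T n = (\<Sum>j. \<delta> (j + n))" for n
  have tail: "lp_trunc p N (\<lambda>i. X m i - X n i) \<le> T n" if "n \<le> m" for n m N
    unfolding T_def by (rule lp_trunc_diff_le_tail[where X = X, OF p \<delta> increment that])
  define y where "y i = X 0 i + (\<Sum>k. X (Suc k) i - X k i)" for i
  have "\<bar>X (Suc k) i - X k i\<bar> \<le> \<delta> k" for k i
    using abs_le_lp_trunc[OF p lessI, of "\<lambda>i. X (Suc k) i - X k i" i] increment[of "Suc i" k] by linarith
  then have "summable (\<lambda>k. X (Suc k) i - X k i)" for i
    by (intro summable_comparison_test'[OF \<delta>, of 0]) auto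
  then have "(\<lambda>n. X 0 i + (\<Sum>k<n. X (Suc k) i - X k i)) \<longlonglongrightarrow> X 0 i + (\<Sum>k. X (Suc k) i - X k i)" for i
    by (intro tendsto_add tendsto_const summable_LIMSEQ)
  moreover have "X 0 i + (\<Sum>k<n. X (Suc k) i - X k i) = X n i" for n i
    using sum_lessThan_telescope[of "\<lambda>k. X k i" n] by simp
  ultimately have Xy: "(\<lambda>n. X n i) \<longlonglongrightarrow> y i" for i
    unfolding y_def by simp
  \<comment> \<open>Pass to the limit \<open>m \<rightarrow> \<infinity>\<close> in \<open>lp_trunc p N (X n - X m) \<le> T n\<close>; on the first \<open>N\<close> entries
      the \<open>\<ell>\<^sup>1\<close> distance to \<open>y\<close> controls \<open>lp_trunc\<close>.\<close>
  have limit: "lp_trunc p N (\<lambda>i. X n i - y i) \<le> T n" for n N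
  proof -
    define c where "c = lp_trunc p N (\<lambda>_. 1)"
    have "(\<lambda>m. T n + (\<Sum>i<N. \<bar>X m i - y i\<bar>) * c) \<longlonglongrightarrow> T n + (\<Sum>i<N. \<bar>y i - y i\<bar>) * c"
      by (intro tendsto_intros Xy)
    then have "(\<lambda>m. T n + (\<Sum>i<N. \<bar>X m i - y i\<bar>) * c) \<longlonglongrightarrow> T n"
      by simp
    moreover have "lp_trunc p N (\<lambda>i. X n i - y i) \<le> T n + (\<Sum>i<N. \<bar>X m i - y i\<bar>) * c"
      if "n \<le> m" for m
      using lp_trunc_diff_triangle[OF p, of N "X n" y "X m"] tail[OF that, of N]
        lp_trunc_minus_commute[OF p, of N "X n" "X m"] lp_trunc_le_sum_abs[OF p, of N "\<lambda>i. X m i - y i"]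
      unfolding c_def by linarith
    ultimately show ?thesis
      using LIMSEQ_le_const by blast
  qed
  have "lp_trunc p N y \<le> T 0 + K" for N
    using lp_trunc_triangle[OF p, of N "\<lambda>i. y i - X 0 i" "X 0"] limit[of N 0] start[of N]
      lp_trunc_minus_commute[OF p, of N y "X 0"]
    by simp
  then have "in_lp p y"
    by (rule lp_norm_le_if_lp_trunc_le(1)[OF p])
  moreover have "(\<lambda>n. lp_norm p (\<lambda>i. X n i - y i)) \<longlonglongrightarrow> 0"
  proof (rule real_tendsto_sandwich[OF _ _ tendsto_const])
    show "T \<longlonglongrightarrow> 0"
      unfolding T_def by (rule suminf_exist_split2[OF \<delta>])
  qed (use lp_norm_le_if_lp_trunc_le(2,3)[OF p limit] in auto)
  ultimately show ?thesis
    by blast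
qed

lemma lp_convergent_if_increments_linear:
  fixes X :: "nat \<Rightarrow> nat \<Rightarrow> real" and a \<beta> :: "nat \<Rightarrow> real"
  assumes p: "1 \<le> p"
    and a: "\<And>n. 0 \<le> a n" "summable a" and \<beta>: "summable \<beta>"
    and start: "\<And>N. lp_trunc p N (X 0) \<le> K"
    and increment: "\<And>n N. lp_trunc p N (\<lambda>i. X (Suc n) i - X n i) \<le> a n * lp_trunc p N (X n) + \<beta> n"
  shows "\<exists>y. in_lp p y \<and> (\<lambda>n. lp_norm p (\<lambda>i. X n i - y i)) \<longlonglongrightarrow> 0"
proof (rule lp_convergent_if_summable_increments[where X = X, OF p _ start])
  define M where "M = (K + suminf \<beta>) * exp (suminf a)"
  have "lp_trunc p N (X n) \<le> M" for n N
    unfolding M_def by (rule lp_trunc_bounded_if_increments_linear[OF p a \<beta> start increment])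
  then show "lp_trunc p N (\<lambda>i. X (Suc n) i - X n i) \<le> a n * M + \<beta> n" for n N
    using increment[of N n] mult_left_mono[OF _ a(1)[of n]] by (meson add_right_mono order_trans)
  show "summable (\<lambda>n. a n * M + \<beta> n)"
    by (intro summable_add summable_mult2 a(2) \<beta>)
qed

section \<open>The convolutional network\<close>

lemma sum_lessThan_shift:
  fixes h :: "nat \<Rightarrow> real"
  shows "(\<Sum>i<N. if j \<le> i then h (i - j) else 0) = (\<Sum>k<N - j. h k)"
proof (induction N)
  case (Suc N)
  then show ?case
    by (cases "j \<le> N") (auto simp: Suc_diff_le)
qed simp

lemma lp_trunc_shift_le:
  assumes "1 \<le> p"
  shows "lp_trunc p N (\<lambda>i. if j \<le> i then f (i - j) else 0) \<le> lp_trunc p N f"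
proof (cases "p = \<infinity>")
  case True
  have "\<bar>if j \<le> i then f (i - j) else 0\<bar> \<le> lp_trunc p N f" if "i < N" for i
    using lp_trunc_nonneg[of p N f] abs_le_lp_trunc[OF assms, of "i - j" N f] that by auto
  then show ?thesis
    using True lp_trunc_nonneg[of p N f] by (intro lp_trunc_infinity_le) auto
next
  case False
  let ?r = "real_of_ereal p"
  have "(\<Sum>i<N. \<bar>if j \<le> i then f (i - j) else 0\<bar> powr ?r)
      = (\<Sum>i<N. if j \<le> i then \<bar>f (i - j)\<bar> powr ?r else 0)"
    by (intro sum.cong) auto
  also have "\<dots> = (\<Sum>k<N - j. \<bar>f k\<bar> powr ?r)"
    by (rule sum_lessThan_shift)
  also have "\<dots> \<le> (\<Sum>k<N. \<bar>f k\<bar> powr ?r)"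
    by (intro sum_mono2) auto
  finally show ?thesis
    unfolding lp_trunc_finite[OF False] using one_le_real_of_ereal[OF assms False]
    by (intro powr_mono2) (auto intro: sum_nonneg)
qed

lemma conv_unit_mask:
  assumes "v 0 = 1" "\<And>i. m \<le> i \<Longrightarrow> x i = 0"
  shows "conv m s v x i = x i + (\<Sum>j\<in>{1..s}. if j \<le> i then v j * x (i - j) else 0)"
proof -
  have "conv m s v x i = (\<Sum>j\<le>s. if j \<le> i then v j * x (i - j) else 0)"
    unfolding conv_def using assms(2) by (intro sum.cong) (auto simp: not_less)
  also have "{..s} = insert 0 {1..s}"
    by auto
  finally show ?thesis
    using assms(1) by simp
qed

lemma lp_trunc_conv_tail_le:
  assumes "1 \<le> p"
  shows "lp_trunc p N (\<lambda>i. \<Sum>j\<in>{1..s}. if j \<le> i then v j * x (i - j) else 0)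
    \<le> (\<Sum>j\<in>{1..s}. \<bar>v j\<bar>) * lp_trunc p N x"
proof -
  have "lp_trunc p N (\<lambda>i. \<Sum>j\<in>{1..s}. if j \<le> i then v j * x (i - j) else 0)
      \<le> (\<Sum>j\<in>{1..s}. lp_trunc p N (\<lambda>i. v j * (if j \<le> i then x (i - j) else 0)))"
    using lp_trunc_sum_le[OF assms, of "{1..s}" N "\<lambda>j i. v j * (if j \<le> i then x (i - j) else 0)"]
    by (simp add: if_distrib cong: if_cong)
  also have "\<dots> \<le> (\<Sum>j\<in>{1..s}. \<bar>v j\<bar> * lp_trunc p N x)"
    by (intro sum_mono order_trans[OF lp_trunc_mult_le[OF assms]] mult_left_mono lp_trunc_shift_le[OF assms])
      simp
  finally show ?thesis
    by (simp add: sum_distrib_right)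
qed

lemma abs_relu_add_minus_le: "0 \<le> u \<Longrightarrow> \<bar>relu (u + v) - u\<bar> \<le> \<bar>v\<bar>"
  by (auto simp: relu_def)

lemma lp_trunc_relu_layer_diff_le:
  assumes p: "1 \<le> p" and v0: "v 0 = 1"
    and x_nonneg: "\<And>i. 0 \<le> x i" and x_support: "\<And>i. m \<le> i \<Longrightarrow> x i = 0"
  shows "lp_trunc p N (\<lambda>i. zext (m + s) (\<lambda>i. relu (conv m s v x i + c i)) i - x i)
    \<le> (\<Sum>j\<in>{1..s}. \<bar>v j\<bar>) * lp_trunc p N x + lp_trunc p N (zext (m + s) c)"
proof -
  define tail where "tail i = (\<Sum>j\<in>{1..s}. if j \<le> i then v j * x (i - j) else 0)" for i
  have conv: "conv m s v x i = x i + tail i" for i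
    unfolding tail_def using conv_unit_mask[of v m x] v0 x_support by blast
  have "\<bar>zext (m + s) (\<lambda>i. relu (conv m s v x i + c i)) i - x i\<bar> \<le> \<bar>tail i + zext (m + s) c i\<bar>" for i
  proof (cases "i < m + s")
    case True
    then show ?thesis
      using abs_relu_add_minus_le[OF x_nonneg, of i "tail i + c i"]
      by (simp add: zext_def conv add.assoc)
  next
    case False
    then show ?thesis
      using x_support[of i] by (simp add: zext_def)
  qed
  then have "lp_trunc p N (\<lambda>i. zext (m + s) (\<lambda>i. relu (conv m s v x i + c i)) i - x i)
      \<le> lp_trunc p N (\<lambda>i. tail i + zext (m + s) c i)"
    by (rule lp_trunc_mono[OF p])
  also have "\<dots> \<le> lp_trunc p N tail + lp_trunc p N (zext (m + s) c)"
    by (rule lp_trunc_triangle[OF p])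
  also have "\<dots> \<le> (\<Sum>j\<in>{1..s}. \<bar>v j\<bar>) * lp_trunc p N x + lp_trunc p N (zext (m + s) c)"
    unfolding tail_def using lp_trunc_conv_tail_le[OF p] by (rule add_right_mono)
  finally show ?thesis .
qed

lemma cnn_eq_0_beyond_width: "width d s n \<le> i \<Longrightarrow> cnn d s w b x n i = 0"
  by (cases n) (auto simp: zext_def)

lemma cnn_nonneg: "(\<And>i. i < d \<Longrightarrow> 0 \<le> x i) \<Longrightarrow> 0 \<le> cnn d s w b x n i"
  by (cases n) (auto simp: zext_def relu_def)

lemma lp_trunc_zext_le_lp_norm:
  assumes "1 \<le> p"
  shows "lp_trunc p N (zext m f) \<le> lp_norm p (zext m f)"
proof (rule lp_trunc_le_lp_norm[OF assms])
  have "lp_trunc p N (zext m f) \<le> lp_trunc p m (zext m f)" for N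
    by (rule lp_trunc_le_support[OF assms]) (simp add: zext_def)
  then show "bdd_above (range (\<lambda>N. lp_trunc p N (zext m f)))"
    by (auto simp: bdd_above_def)
qed

lemma lp_trunc_cnn_increment_le:
  assumes "1 \<le> p" "w (Suc n) 0 = 1" "\<And>i. i < d \<Longrightarrow> 0 \<le> x i"
  shows "lp_trunc p N (\<lambda>i. cnn d s w b x (Suc n) i - cnn d s w b x n i)
    \<le> (\<Sum>j\<in>{1..s (Suc n)}. \<bar>w (Suc n) j\<bar>) * lp_trunc p N (cnn d s w b x n)
      + lp_norm p (zext (width d s (Suc n)) (b (Suc n)))"
proof -
  have "lp_trunc p N (\<lambda>i. cnn d s w b x (Suc n) i - cnn d s w b x n i)
      \<le> (\<Sum>j\<in>{1..s (Suc n)}. \<bar>w (Suc n) j\<bar>) * lp_trunc p N (cnn d s w b x n)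
        + lp_trunc p N (zext (width d s (Suc n)) (b (Suc n)))"
    using lp_trunc_relu_layer_diff_le[where v = "w (Suc n)" and x = "cnn d s w b x n" and m = "width d s n"]
      assms cnn_nonneg[of d x] cnn_eq_0_beyond_width
    by simp
  then show ?thesis
    using lp_trunc_zext_le_lp_norm[OF assms(1)] by (meson add_left_mono order_trans)
qed

theorem theorem6p1:
  fixes p :: ereal and d :: nat
    and s :: "nat \<Rightarrow> nat"
    and w :: "nat \<Rightarrow> nat \<Rightarrow> real"
    and b :: "nat \<Rightarrow> nat \<Rightarrow> real"
  assumes p: "1 \<le> p"
    and bias: "summable (\<lambda>n. lp_norm p (zext (width d s (Suc n)) (b (Suc n))))"
    and w0: "\<And>n. n \<ge> 1 \<Longrightarrow> w n 0 = 1"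
    and wsum: "summable (\<lambda>n. \<Sum>j\<in>{1..s (Suc n)}. \<bar>w (Suc n) j\<bar>)"
  shows "\<forall>x :: nat \<Rightarrow> real. (\<forall>i<d. 0 \<le> x i \<and> x i \<le> 1) \<longrightarrow>
           (\<exists>y. in_lp p y \<and>
              (\<lambda>n. lp_norm p (\<lambda>i. cnn d s w b x n i - y i)) \<longlonglongrightarrow> 0)"
proof (intro allI impI)
  fix x :: "nat \<Rightarrow> real"
  assume x: "\<forall>i<d. 0 \<le> x i \<and> x i \<le> 1"
  have start: "lp_trunc p N (cnn d s w b x 0) \<le> lp_trunc p d (cnn d s w b x 0)" for N
    by (rule lp_trunc_le_support[OF p]) (simp add: zext_def)
  have increment: "lp_trunc p N (\<lambda>i. cnn d s w b x (Suc n) i - cnn d s w b x n i)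
      \<le> (\<Sum>j\<in>{1..s (Suc n)}. \<bar>w (Suc n) j\<bar>) * lp_trunc p N (cnn d s w b x n)
        + lp_norm p (zext (width d s (Suc n)) (b (Suc n)))" for n N
    using lp_trunc_cnn_increment_le[of p w n d x] p w0 x by simp
  show "\<exists>y. in_lp p y \<and> (\<lambda>n. lp_norm p (\<lambda>i. cnn d s w b x n i - y i)) \<longlonglongrightarrow> 0"
    by (rule lp_convergent_if_increments_linear[OF p _ wsum bias start increment]) (simp add: sum_nonneg)
qed

end
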